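(* For every fixed $d$ there is a constant $C_d$ such that for any set $P$ of $n$ points in $\mathbb{R}^d$ there is a (constructible) collection $\mathcal{B}(P)$ of at most $n/8$ axis-parallel boxes such that every axis-parallel box $R\subseteq\mathbb{R}^d$ can be written as a disjoint union of some boxes from $\mathcal{B}(P)$ together with a region $R'\subseteq R$ containing at most $C_d\log^{2d-2}n$ points of $P$.
   Context: An axis-parallel box in $\mathbb{R}^d$ is a product of $d$ intervals. *)

theory Defs
  imports "HOL-Analysis.Analysis"
begin

definition axis_box :: "(real ^ 'n) set \<Rightarrow> bool" where
  "axis_box S \<longleftrightarrow> (\<exists>I :: 'n \<Rightarrow> real set. (\<forall>i. is_interval (I i)) \<and> S = {x. \<forall>i. x $ i \<in> I i})"

end

theory Submission
  imports Defs "HOL-Library.Log_Nat"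
begin

text \<open>A range-tree argument on coordinate ranks. Points with equal \<open>i\<close>-th coordinate get equal
  \<open>i\<close>-rank, so subsets of \<open>P\<close> whose \<open>i\<close>-ranks lie in disjoint intervals are strictly separated in
  coordinate \<open>i\<close>, and their bounding boxes are disjoint. In one coordinate, the blocks of
  \<open>m = 3K\<close> consecutive ranks together with the tie classes of size at least \<open>m\<close> form \<open>n/K\<close> sets,
  and every slab is covered by such sets up to the \<open>O(K)\<close> light points of its two boundary blocks.
  To add a coordinate \<open>i\<close>, cut the \<open>i\<close>-ranks into dyadic blocks on \<open>L + 1 = O(log n)\<close> levels
  and build a family for the remaining coordinates with parameter \<open>K (L + 1)\<close> on every block. A
  slab is the disjoint union of at most two maximal dyadic blocks per level, so each coordinate
  beyond the first multiplies the number of uncovered points by \<open>O((L + 1)^2)\<close>.\<close>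

section \<open>Coordinate ranks\<close>

definition coord_rank :: "(real^'n) set \<Rightarrow> 'n \<Rightarrow> real^'n \<Rightarrow> nat" where
  "coord_rank P i x = card {y\<in>P. y$i < x$i}"

definition rank_slice :: "(real^'n) set \<Rightarrow> 'n \<Rightarrow> nat set \<Rightarrow> (real^'n) set" where
  "rank_slice P i U = {x\<in>P. coord_rank P i x \<in> U}"

lemma coord_rank_mono:
  assumes "finite P" "x$i \<le> y$i"
  shows "coord_rank P i x \<le> coord_rank P i y"
  unfolding coord_rank_def using assms by (intro card_mono) auto

lemma coord_rank_strict_mono:
  assumes "finite P" "x \<in> P" "x$i < y$i"
  shows "coord_rank P i x < coord_rank P i y"
  unfolding coord_rank_def using assms by (intro psubset_card_mono) auto

lemma less_if_coord_rank_less: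
  assumes "finite P" "coord_rank P i x < coord_rank P i y"
  shows "x$i < y$i"
  using coord_rank_mono[OF assms(1), of y i x] assms(2) by (meson leD leI)

lemma coord_rank_less_card:
  assumes "finite P" "x \<in> P"
  shows "coord_rank P i x < card P"
  unfolding coord_rank_def using assms by (intro psubset_card_mono) auto

lemma card_rank_slice_lessThan:
  assumes "finite P" "y \<in> P"
  shows "card (rank_slice P i {..<coord_rank P i y}) = coord_rank P i y"
proof -
  have "rank_slice P i {..<coord_rank P i y} = {x\<in>P. x$i < y$i}"
    using assms coord_rank_strict_mono less_if_coord_rank_less by (fastforce simp: rank_slice_def)
  then show ?thesis by (simp add: coord_rank_def)
qed

lemma card_rank_slice_between:
  assumes "finite P" "y \<in> P" "z \<in> P"
  shows "card (rank_slice P i {coord_rank P i z..<coord_rank P i y}) = coord_rank P i y - coord_rank P i z"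
proof (cases "coord_rank P i z \<le> coord_rank P i y")
  case True
  have "rank_slice P i {coord_rank P i z..<coord_rank P i y} =
      rank_slice P i {..<coord_rank P i y} - rank_slice P i {..<coord_rank P i z}"
    by (auto simp: rank_slice_def)
  moreover have "rank_slice P i {..<coord_rank P i z} \<subseteq> rank_slice P i {..<coord_rank P i y}"
    using True by (auto simp: rank_slice_def)
  moreover have "finite (rank_slice P i {..<coord_rank P i z})"
    using assms(1) by (simp add: rank_slice_def)
  ultimately show ?thesis
    using assms by (simp add: card_Diff_subset card_rank_slice_lessThan)
qed (simp add: rank_slice_def)

lemma slab_eq_rank_slice:
  assumes "finite P" "is_interval X"
  obtains s e where "e \<le> card P" "{x\<in>P. x$i \<in> X} = rank_slice P i {s..<e}"
proof (cases "{x\<in>P. x$i \<in> X} = {}")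
  case True
  then show ?thesis using that[of 0 0] by (simp add: rank_slice_def)
next
  case False
  define R where "R = coord_rank P i ` {x\<in>P. x$i \<in> X}"
  have R: "finite R" "R \<noteq> {}" using assms(1) False by (auto simp: R_def)
  obtain xs xt where xs: "xs \<in> P" "xs$i \<in> X" "coord_rank P i xs = Min R"
    and xt: "xt \<in> P" "xt$i \<in> X" "coord_rank P i xt = Max R"
    using Min_in[OF R] Max_in[OF R] by (auto simp: R_def)
  have "x$i \<in> X \<longleftrightarrow> coord_rank P i x \<in> {Min R..<Suc (Max R)}" if "x \<in> P" for x
  proof
    assume "x$i \<in> X"
    then have "coord_rank P i x \<in> R" using that by (simp add: R_def)
    then show "coord_rank P i x \<in> {Min R..<Suc (Max R)}"
      using R by (simp add: less_Suc_eq_le)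
  next
    assume "coord_rank P i x \<in> {Min R..<Suc (Max R)}"
    then have "\<not> x$i < xs$i" "\<not> xt$i < x$i"
      using coord_rank_strict_mono[OF assms(1) that] coord_rank_strict_mono[OF assms(1) xt(1)] xs xt by force+
    then show "x$i \<in> X"
      using assms(2) xs(2) xt(2) unfolding is_interval_1 by (meson not_less)
  qed
  moreover have "Suc (Max R) \<le> card P"
    using coord_rank_less_card[OF assms(1) xt(1), of i] xt(3) by simp
  ultimately show ?thesis
    using that[of "Suc (Max R)" "Min R"] by (auto simp: rank_slice_def)
qed

section \<open>Blocks of consecutive ranks\<close>

definition block :: "nat \<Rightarrow> nat \<Rightarrow> nat set" where
  "block m a = {a * m..<(a + 1) * m}"

lemma mem_block_iff:
  assumes "0 < m"
  shows "k \<in> block m a \<longleftrightarrow> k div m = a"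
proof -
  have "a * m \<le> k \<longleftrightarrow> a \<le> k div m" "k < (a + 1) * m \<longleftrightarrow> k div m < a + 1"
    using assms by (simp_all add: less_eq_div_iff_mult_less_eq div_less_iff_less_mult)
  then show ?thesis by (auto simp: block_def)
qed

lemma block_subset_iff:
  assumes "0 < m"
  shows "block m a \<subseteq> {s..<e} \<longleftrightarrow> s \<le> a * m \<and> (a + 1) * m \<le> e"
  using assms by (simp add: block_def atLeastLessThan_subset_iff)

lemma block_pow2_mono:
  assumes "l \<le> l'"
  shows "block (2^l) (k div 2^l) \<subseteq> block (2^l') (k div 2^l')"
proof
  fix x assume "x \<in> block (2^l) (k div 2^l)"
  then have "x div 2^l = k div 2^l" by (simp add: mem_block_iff)
  moreover have "(2::nat)^l' = 2^l * 2^(l' - l)"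
    using assms by (simp flip: power_add)
  then have "y div 2^l' = y div 2^l div 2^(l' - l)" for y :: nat
    by (simp add: div_mult2_eq)
  ultimately show "x \<in> block (2^l') (k div 2^l')" by (simp add: mem_block_iff)
qed

lemma boundary_block:
  assumes "0 < m" "k \<in> block m a" "k \<in> {s..<e}" "k' \<in> block m a" "k' \<notin> {s..<e}"
  shows "a = s div m \<or> a = e div m"
proof -
  have a: "k div m = a" "k' div m = a" using assms by (simp_all add: mem_block_iff)
  show ?thesis
  proof (cases "k' < s")
    case True
    then show ?thesis using assms(3) a div_le_mono[of k' s m] div_le_mono[of s k m] by auto
  next
    case False
    then show ?thesis using assms(3,5) a div_le_mono[of e k' m] div_le_mono[of k e m] by auto
  qed
qed

section \<open>Separated families\<close>

definition separated :: "'n set \<Rightarrow> (real^'n) set \<Rightarrow> (real^'n) set \<Rightarrow> bool" where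
  "separated J A B \<longleftrightarrow> (\<exists>i\<in>J. (\<forall>x\<in>A. \<forall>y\<in>B. x$i < y$i) \<or> (\<forall>x\<in>A. \<forall>y\<in>B. y$i < x$i))"

lemma separated_mono: "separated J A B \<Longrightarrow> J \<subseteq> J' \<Longrightarrow> separated J' A B"
  unfolding separated_def by blast

lemma separated_if_disjoint_rank_intervals:
  assumes "finite P" "i \<in> J"
    and "A \<subseteq> rank_slice P i {p..<q}" "B \<subseteq> rank_slice P i {p'..<q'}"
    and "{p..<q} \<inter> {p'..<q'} = {}"
  shows "separated J A B"
proof -
  have rank_A: "x \<in> P \<and> p \<le> coord_rank P i x \<and> coord_rank P i x < q" if "x \<in> A" for x
    using assms(3) that by (auto simp: rank_slice_def)
  have rank_B: "y \<in> P \<and> p' \<le> coord_rank P i y \<and> coord_rank P i y < q'" if "y \<in> B" for y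
    using assms(4) that by (auto simp: rank_slice_def)
  have "q \<le> p' \<or> q' \<le> p \<or> q \<le> p \<or> q' \<le> p'"
    using assms(5) by (auto simp: disjoint_iff)
  then have "(\<forall>x\<in>A. \<forall>y\<in>B. x$i < y$i) \<or> (\<forall>x\<in>A. \<forall>y\<in>B. y$i < x$i)"
  proof (elim disjE)
    assume "q \<le> p'"
    then show ?thesis
      using rank_A rank_B less_if_coord_rank_less[OF assms(1)] by (meson less_le_trans)
  next
    assume "q' \<le> p"
    then show ?thesis
      using rank_A rank_B less_if_coord_rank_less[OF assms(1)] by (meson less_le_trans)
  qed (use rank_A rank_B in force)+
  then show ?thesis
    unfolding separated_def using assms(2) by blast
qed

lemma pairwise_separated_rank_slices:
  assumes "finite P" "i \<in> J" "\<And>U. U \<in> \<U> \<Longrightarrow> \<exists>p q. U = {p..<q}" "pairwise disjnt \<U>"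
  shows "pairwise (separated J) (rank_slice P i ` \<U>)"
proof (rule pairwise_imageI)
  fix U V assume "U \<in> \<U>" "V \<in> \<U>" "U \<noteq> V"
  then have "U \<inter> V = {}" using assms(4) by (auto simp: pairwise_def disjnt_def)
  moreover obtain p q p' q' where "U = {p..<q}" "V = {p'..<q'}"
    using assms(3) \<open>U \<in> \<U>\<close> \<open>V \<in> \<U>\<close> by meson
  ultimately show "separated J (rank_slice P i U) (rank_slice P i V)"
    by (intro separated_if_disjoint_rank_intervals[OF assms(1,2)]) auto
qed

definition coord_box :: "'n set \<Rightarrow> ('n \<Rightarrow> real set) \<Rightarrow> (real^'n) set" where
  "coord_box J I = {x. \<forall>j\<in>J. x$j \<in> I j}"

lemma coord_box_singleton: "coord_box {i} I = {x. x$i \<in> I i}"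
  by (simp add: coord_box_def)

lemma coord_box_insert: "coord_box (insert i J) I = {x. x$i \<in> I i} \<inter> coord_box J I"
  by (auto simp: coord_box_def)

text \<open>Pairwise separated sets have pairwise disjoint bounding boxes; for \<open>J = UNIV\<close> these boxes
  are the boxes of the theorem.\<close>

definition canonical_family ::
    "'n set \<Rightarrow> (real^'n) set \<Rightarrow> nat \<Rightarrow> nat \<Rightarrow> (real^'n) set set \<Rightarrow> bool" where
  "canonical_family J P K E F \<longleftrightarrow> finite F \<and> (\<forall>Q\<in>F. Q \<subseteq> P) \<and> card F * K \<le> card P \<and>
    (\<forall>I. (\<forall>j. is_interval (I j)) \<longrightarrow>
      (\<exists>S\<subseteq>F. pairwise (separated J) S \<and> \<Union>S \<subseteq> coord_box J I \<and>
         card (P \<inter> coord_box J I - \<Union>S) \<le> E))"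

lemma canonical_familyI:
  assumes "finite F" "\<And>Q. Q \<in> F \<Longrightarrow> Q \<subseteq> P" "card F * K \<le> card P"
    and "\<And>I. \<forall>j. is_interval (I j) \<Longrightarrow> \<exists>S\<subseteq>F. pairwise (separated J) S \<and>
           \<Union>S \<subseteq> coord_box J I \<and> card (P \<inter> coord_box J I - \<Union>S) \<le> E"
  shows "canonical_family J P K E F"
  using assms unfolding canonical_family_def by blast

lemma canonical_familyD:
  assumes "canonical_family J P K E F"
  shows "finite F" "Q \<in> F \<Longrightarrow> Q \<subseteq> P" "card F * K \<le> card P"
  using assms unfolding canonical_family_def by blast+

lemma canonical_family_query:
  assumes "canonical_family J P K E F" "\<forall>j. is_interval (I j)"
  obtains S where "S \<subseteq> F" "pairwise (separated J) S" "\<Union>S \<subseteq> coord_box J I"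
    "card (P \<inter> coord_box J I - \<Union>S) \<le> E"
  using assms unfolding canonical_family_def by blast

lemma canonical_family_mono:
  assumes "canonical_family J P K E F" "E \<le> E'"
  shows "canonical_family J P K E' F"
  using assms unfolding canonical_family_def by (meson order_trans)

lemma canonical_family_empty:
  assumes "finite P" "card P \<le> E"
  shows "canonical_family J P K E {}"
proof (rule canonical_familyI)
  fix I
  have "card (P \<inter> coord_box J I) \<le> E"
    using assms by (meson Int_lower1 card_mono order_trans)
  then show "\<exists>S\<subseteq>{}. pairwise (separated J) S \<and> \<Union>S \<subseteq> coord_box J I \<and>
      card (P \<inter> coord_box J I - \<Union>S) \<le> E" by auto
qed auto

section \<open>Maximal dyadic blocks\<close>

lemma card_le_2_if_no_three_increasing:
  fixes A :: "'a::linorder set"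
  assumes "finite A" "\<And>a b c. a \<in> A \<Longrightarrow> b \<in> A \<Longrightarrow> c \<in> A \<Longrightarrow> a < b \<Longrightarrow> b < c \<Longrightarrow> False"
  shows "card A \<le> 2"
proof (cases "A = {}")
  case False
  have "A \<subseteq> {Min A, Max A}"
    using assms False Min_in Min_le Max_in Max_ge by (metis insertCI order.not_eq_order_implies_strict subsetI)
  then have "card A \<le> card {Min A, Max A}" by (intro card_mono) auto
  also have "\<dots> \<le> 2" by (simp add: card_insert_if)
  finally show ?thesis .
qed simp

text \<open>\<open>block (2^Suc l) (a div 2)\<close> is the parent of the dyadic block \<open>block (2^l) a\<close>.\<close>

definition maximal_dyadic_blocks :: "nat \<Rightarrow> nat \<Rightarrow> nat \<Rightarrow> (nat \<times> nat) set" where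
  "maximal_dyadic_blocks L s e = {(l, a). l \<le> L \<and> block (2^l) a \<subseteq> {s..<e} \<and>
     \<not> block (2^Suc l) (a div 2) \<subseteq> {s..<e}}"

lemma maximal_dyadic_blocks_subset:
  "maximal_dyadic_blocks L s e \<subseteq> {..L} \<times> {..<e}"
proof (rule subsetI)
  fix t assume "t \<in> maximal_dyadic_blocks L s e"
  then obtain l a where t: "t = (l, a)" "l \<le> L" "(a + 1) * 2^l \<le> e"
    by (cases t) (auto simp: maximal_dyadic_blocks_def block_subset_iff)
  moreover have "a + 1 \<le> (a + 1) * 2^l" using mult_le_mono2[of 1 "2^l" "a + 1"] by simp
  ultimately show "t \<in> {..L} \<times> {..<e}" by simp
qed

lemma maximal_dyadic_blocks_cover:
  assumes "e \<le> 2^L" "k \<in> {s..<e}"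
  shows "\<exists>(l, a)\<in>maximal_dyadic_blocks L s e. k \<in> block (2^l) a"
proof -
  define M where "M = {l. l \<le> L \<and> block (2^l) (k div 2^l) \<subseteq> {s..<e}}"
  have "0 \<in> M" using assms(2) by (auto simp: M_def mem_block_iff)
  moreover have "finite M" by (simp add: M_def)
  ultimately have l: "Max M \<in> M" "\<And>l. l \<in> M \<Longrightarrow> l \<le> Max M"
    by (auto intro: Max_in)
  define l where "l = Max M"
  have parent: "k div 2^l div 2 = k div 2^Suc l"
    by (metis div_mult2_eq power_Suc2)
  have "\<not> block (2^Suc l) (k div 2^l div 2) \<subseteq> {s..<e}"
  proof
    assume inside: "block (2^Suc l) (k div 2^l div 2) \<subseteq> {s..<e}"
    show False
    proof (cases "l < L")
      case True
      then have "Suc l \<in> M" using inside parent by (simp add: M_def)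
      then show False using l(2) by (fastforce simp: l_def)
    next
      case False
      have "(k div 2^l div 2 + 1) * 2^Suc l \<le> e"
        using inside by (simp add: block_subset_iff)
      moreover have "2^Suc l \<le> (k div 2^l div 2 + 1) * 2^Suc l" by simp
      ultimately have "2^Suc l \<le> e" by (rule order_trans[rotated])
      moreover have "l = L" using False l(1) by (simp add: l_def M_def)
      ultimately have "2 * 2^L \<le> e" by simp
      moreover have "(0::nat) < 2^L" by simp
      ultimately show False using assms(1) by linarith
    qed
  qed
  then have "(l, k div 2^l) \<in> maximal_dyadic_blocks L s e"
    using l(1) by (simp add: maximal_dyadic_blocks_def l_def M_def)
  moreover have "k \<in> block (2^l) (k div 2^l)" by (simp add: mem_block_iff)
  ultimately show ?thesis by blast
qed

lemma maximal_dyadic_blocks_disjoint: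
  assumes "(l, a) \<in> maximal_dyadic_blocks L s e" "(l', a') \<in> maximal_dyadic_blocks L s e"
    and "(l, a) \<noteq> (l', a')"
  shows "block (2^l) a \<inter> block (2^l') a' = {}"
proof -
  have disjoint: "block (2^l) a \<inter> block (2^l') a' = {}"
    if "(l, a) \<in> maximal_dyadic_blocks L s e" "(l', a') \<in> maximal_dyadic_blocks L s e"
      and "(l, a) \<noteq> (l', a')" "l \<le> l'" for l a l' a'
  proof (rule ccontr)
    assume "block (2^l) a \<inter> block (2^l') a' \<noteq> {}"
    then obtain k where "k \<in> block (2^l) a" "k \<in> block (2^l') a'" by blast
    then have a: "a = k div 2^l" "a' = k div 2^l'" by (simp_all add: mem_block_iff)
    then have "Suc l \<le> l'" using that(3,4) by (cases "l = l'") auto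
    then have "block (2^Suc l) (k div 2^Suc l) \<subseteq> block (2^l') a'"
      using block_pow2_mono a(2) by blast
    moreover have "a div 2 = k div 2^Suc l" using a by (metis div_mult2_eq power_Suc2)
    ultimately show False
      using that(1,2) by (auto simp: maximal_dyadic_blocks_def)
  qed
  show ?thesis
  proof (cases "l \<le> l'")
    case True
    then show ?thesis using disjoint[OF assms] by simp
  next
    case False
    then show ?thesis using disjoint[OF assms(2,1)] assms(3) by (simp add: Int_commute)
  qed
qed

lemma finite_maximal_dyadic_blocks_level: "finite {a. (l, a) \<in> maximal_dyadic_blocks L s e}"
proof -
  have "{a. (l, a) \<in> maximal_dyadic_blocks L s e} \<subseteq> {..<e}"
    using maximal_dyadic_blocks_subset by blast
  then show ?thesis by (rule finite_subset) simp
qed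

lemma card_maximal_dyadic_blocks_level:
  "card {a. (l, a) \<in> maximal_dyadic_blocks L s e} \<le> 2"
proof (rule card_le_2_if_no_three_increasing[OF finite_maximal_dyadic_blocks_level])
  let ?T = "maximal_dyadic_blocks L s e"
  fix a1 a2 a3 assume a: "a1 \<in> {a. (l, a) \<in> ?T}" "a2 \<in> {a. (l, a) \<in> ?T}"
    "a3 \<in> {a. (l, a) \<in> ?T}" "a1 < a2" "a2 < a3"
  have "s \<le> a1 * 2^l" "(a3 + 1) * 2^l \<le> e"
    using a(1,3) by (auto simp: maximal_dyadic_blocks_def block_subset_iff)
  moreover have "a1 * 2^l \<le> a2 div 2 * 2^Suc l"
  proof -
    have "a1 * 2^l \<le> (a2 div 2 * 2) * 2^l" using a(4) by (intro mult_le_mono1) linarith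
    then show ?thesis by (simp add: algebra_simps)
  qed
  moreover have "(a2 div 2 + 1) * 2^Suc l \<le> (a3 + 1) * 2^l"
  proof -
    have "(a2 div 2 * 2 + 2) * 2^l \<le> (a3 + 1) * 2^l" using a(5) by (intro mult_le_mono1) linarith
    then show ?thesis by (simp add: algebra_simps)
  qed
  ultimately have "block (2^Suc l) (a2 div 2) \<subseteq> {s..<e}"
    unfolding block_subset_iff[OF zero_less_power[OF zero_less_numeral]] by linarith
  then show False using a(2) by (simp add: maximal_dyadic_blocks_def)
qed

lemma card_maximal_dyadic_blocks: "card (maximal_dyadic_blocks L s e) \<le> 2 * (L + 1)"
proof -
  let ?T = "maximal_dyadic_blocks L s e"
  have "?T \<subseteq> (\<Union>l\<in>{..L}. Pair l ` {a. (l, a) \<in> ?T})"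
    using maximal_dyadic_blocks_subset by fastforce
  moreover have "finite (\<Union>l\<in>{..L}. Pair l ` {a. (l, a) \<in> ?T})"
    by (intro finite_UN_I finite_imageI finite_maximal_dyadic_blocks_level) simp
  ultimately have "card ?T \<le> card (\<Union>l\<in>{..L}. Pair l ` {a. (l, a) \<in> ?T})"
    by (rule card_mono[rotated])
  also have "\<dots> \<le> (\<Sum>l\<in>{..L}. card (Pair l ` {a. (l, a) \<in> ?T}))"
    by (rule card_UN_le) simp
  also have "\<dots> \<le> (\<Sum>l\<in>{..L}. 2)"
    using card_maximal_dyadic_blocks_level by (intro sum_mono) (simp add: card_image inj_on_def)
  finally show ?thesis by simp
qed

section \<open>One coordinate\<close>

definition heavy_ranks :: "(real^'n) set \<Rightarrow> 'n \<Rightarrow> nat \<Rightarrow> nat set" where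
  "heavy_ranks P i m = {r. r < card P \<and> m \<le> card (rank_slice P i {r})}"

text \<open>Ties in coordinate \<open>i\<close> can make a block of \<open>m\<close> consecutive ranks arbitrarily large, so
  the tie classes of size at least \<open>m\<close> are added as sets of their own.\<close>

definition single_coord_family :: "(real^'n) set \<Rightarrow> 'n \<Rightarrow> nat \<Rightarrow> (real^'n) set set" where
  "single_coord_family P i m =
     rank_slice P i ` (block m ` {..card P div m} \<union> (\<lambda>r. {r}) ` heavy_ranks P i m)"

lemma card_heavy_ranks:
  assumes "finite P"
  shows "card (heavy_ranks P i m) * m \<le> card P"
proof -
  let ?H = "heavy_ranks P i m"
  have "card ?H * m \<le> (\<Sum>r\<in>?H. card (rank_slice P i {r}))"
    using sum_mono[of ?H "\<lambda>_. m"] by (simp add: heavy_ranks_def)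
  also have "\<dots> = card (\<Union>r\<in>?H. rank_slice P i {r})"
    using assms by (intro card_UN_disjoint[symmetric]) (auto simp: heavy_ranks_def rank_slice_def)
  also have "\<dots> \<le> card P"
    using assms by (intro card_mono) (auto simp: rank_slice_def)
  finally show ?thesis .
qed

lemma card_single_coord_family:
  assumes "finite P" "m \<le> card P"
  shows "card (single_coord_family P i m) * m \<le> 3 * card P"
proof -
  let ?n = "card P" and ?H = "heavy_ranks P i m"
  have "finite ?H" by (simp add: heavy_ranks_def)
  then have "card (single_coord_family P i m) \<le> card (block m ` {..?n div m} \<union> (\<lambda>r. {r}) ` ?H)"
    unfolding single_coord_family_def by (intro card_image_le) simp
  also have "\<dots> \<le> card (block m ` {..?n div m}) + card ((\<lambda>r. {r}) ` ?H)"
    by (rule card_Un_le)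
  also have "\<dots> \<le> (?n div m + 1) + card ?H"
    using \<open>finite ?H\<close> card_image_le[of "{..?n div m}" "block m"]
    by (intro add_mono card_image_le) auto
  finally have "card (single_coord_family P i m) * m \<le> ?n div m * m + m + card ?H * m"
    by (metis add_mult_distrib mult_1 mult_le_mono1)
  moreover have "?n div m * m \<le> ?n" by (rule div_times_less_eq_dividend)
  ultimately show ?thesis using card_heavy_ranks[OF assms(1), of i m] assms(2) by linarith
qed

definition light_points :: "(real^'n) set \<Rightarrow> 'n \<Rightarrow> nat \<Rightarrow> nat \<Rightarrow> (real^'n) set" where
  "light_points P i m b =
     {x \<in> rank_slice P i (block m b). card (rank_slice P i {coord_rank P i x}) < m}"

lemma card_light_points:
  assumes "finite P"
  shows "card (light_points P i m b) \<le> 2 * m"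
proof (cases "light_points P i m b = {}")
  case False
  define R where "R = coord_rank P i ` light_points P i m b"
  have R: "finite R" "R \<noteq> {}"
    using assms False by (auto simp: R_def light_points_def rank_slice_def)
  obtain y z where y: "y \<in> light_points P i m b" "coord_rank P i y = Max R"
    and z: "z \<in> light_points P i m b" "coord_rank P i z = Min R"
    using Max_in[OF R] Min_in[OF R] by (auto simp: R_def)
  have yz: "y \<in> P" "z \<in> P" using y z by (auto simp: light_points_def rank_slice_def)
  have "light_points P i m b \<subseteq>
      rank_slice P i {coord_rank P i z..<coord_rank P i y} \<union> rank_slice P i {coord_rank P i y}"
  proof
    fix x assume x: "x \<in> light_points P i m b"
    then have "Min R \<le> coord_rank P i x" "coord_rank P i x \<le> Max R"
      using R(1) by (auto simp: R_def)
    then show "x \<in> rank_slice P i {coord_rank P i z..<coord_rank P i y} \<union>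
        rank_slice P i {coord_rank P i y}"
      using x y(2) z(2) by (auto simp: light_points_def rank_slice_def)
  qed
  moreover have "finite (rank_slice P i U)" for U using assms by (simp add: rank_slice_def)
  ultimately have "card (light_points P i m b) \<le>
      card (rank_slice P i {coord_rank P i z..<coord_rank P i y}) + card (rank_slice P i {coord_rank P i y})"
    by (meson card_Un_le card_mono finite_UnI le_trans)
  also have "\<dots> < m + m"
  proof (rule add_less_le_mono)
    have "coord_rank P i y \<in> block m b" "coord_rank P i z \<in> block m b"
      using y z by (auto simp: light_points_def rank_slice_def)
    then show "card (rank_slice P i {coord_rank P i z..<coord_rank P i y}) < m"
      using yz assms by (simp add: card_rank_slice_between block_def) arith
    show "card (rank_slice P i {coord_rank P i y}) \<le> m"
      using y(1) by (simp add: light_points_def)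
  qed
  finally show ?thesis by simp
qed (simp only: card.empty zero_le)

definition inner_blocks :: "(real^'n) set \<Rightarrow> 'n \<Rightarrow> nat \<Rightarrow> nat set \<Rightarrow> nat set" where
  "inner_blocks P i m U = {a\<in>{..card P div m}. rank_slice P i (block m a) \<subseteq> rank_slice P i U}"

definition slab_cover :: "(real^'n) set \<Rightarrow> 'n \<Rightarrow> nat \<Rightarrow> nat set \<Rightarrow> nat set set" where
  "slab_cover P i m U = block m ` inner_blocks P i m U \<union>
     (\<lambda>r. {r}) ` {r\<in>heavy_ranks P i m. r \<in> U \<and> r div m \<notin> inner_blocks P i m U}"

lemma slab_cover_subset: "rank_slice P i ` slab_cover P i m U \<subseteq> single_coord_family P i m"
  by (auto simp: single_coord_family_def slab_cover_def inner_blocks_def)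

lemma Union_slab_cover_subset: "\<Union>(rank_slice P i ` slab_cover P i m U) \<subseteq> rank_slice P i U"
  by (auto simp: slab_cover_def inner_blocks_def rank_slice_def)

lemma pairwise_separated_slab_cover:
  assumes "finite P" "0 < m"
  shows "pairwise (separated {i}) (rank_slice P i ` slab_cover P i m U)"
proof (rule pairwise_separated_rank_slices[OF assms(1)])
  show "\<exists>p q. V = {p..<q}" if "V \<in> slab_cover P i m U" for V
    using that by (auto simp: slab_cover_def block_def) (metis atLeastLessThan_singleton)
  show "pairwise disjnt (slab_cover P i m U)"
    using assms(2) by (auto simp: pairwise_def disjnt_def slab_cover_def mem_block_iff)
qed simp

lemma slab_minus_slab_cover_subset:
  assumes "finite P" "0 < m"
  shows "rank_slice P i {s..<e} - \<Union>(rank_slice P i ` slab_cover P i m {s..<e}) \<subseteq>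
    light_points P i m (s div m) \<union> light_points P i m (e div m)"
proof
  fix x assume x: "x \<in> rank_slice P i {s..<e} - \<Union>(rank_slice P i ` slab_cover P i m {s..<e})"
  define a where "a = coord_rank P i x div m"
  let ?inner = "inner_blocks P i m {s..<e}"
  have xP: "x \<in> P" and r: "coord_rank P i x \<in> {s..<e}" "coord_rank P i x \<in> block m a"
    using x assms(2) by (auto simp: rank_slice_def a_def mem_block_iff)
  have "a \<le> card P div m"
    using coord_rank_less_card[OF assms(1) xP, of i] by (simp add: a_def div_le_mono)
  moreover have "a \<notin> ?inner"
    using x r(2) xP by (auto simp: slab_cover_def rank_slice_def)
  ultimately obtain z where "z \<in> rank_slice P i (block m a)" "z \<notin> rank_slice P i {s..<e}"
    unfolding inner_blocks_def by blast
  then have "a = s div m \<or> a = e div m"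
    using boundary_block[OF assms(2) r(2,1)] by (auto simp: rank_slice_def)
  moreover have "card (rank_slice P i {coord_rank P i x}) < m"
  proof (rule ccontr)
    assume "\<not> ?thesis"
    then have "coord_rank P i x \<in> heavy_ranks P i m"
      using coord_rank_less_card[OF assms(1) xP] by (simp add: heavy_ranks_def)
    then have "{coord_rank P i x} \<in> slab_cover P i m {s..<e}"
      using \<open>a \<notin> ?inner\<close> r(1) by (auto simp: slab_cover_def a_def)
    then show False using x xP by (auto simp: rank_slice_def)
  qed
  ultimately show "x \<in> light_points P i m (s div m) \<union> light_points P i m (e div m)"
    using r(2) xP by (auto simp: light_points_def rank_slice_def)
qed

lemma card_slab_minus_slab_cover:
  assumes "finite P" "0 < m"
  shows "card (rank_slice P i {s..<e} - \<Union>(rank_slice P i ` slab_cover P i m {s..<e})) \<le> 4 * m"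
proof -
  have "finite (light_points P i m b)" for b
    using assms(1) by (simp add: light_points_def rank_slice_def)
  then have "card (rank_slice P i {s..<e} - \<Union>(rank_slice P i ` slab_cover P i m {s..<e})) \<le>
      card (light_points P i m (s div m) \<union> light_points P i m (e div m))"
    by (intro card_mono slab_minus_slab_cover_subset[OF assms]) auto
  also have "\<dots> \<le> card (light_points P i m (s div m)) + card (light_points P i m (e div m))"
    by (rule card_Un_le)
  also have "\<dots> \<le> 4 * m"
    using card_light_points[OF assms(1), of i m "s div m"]
      card_light_points[OF assms(1), of i m "e div m"] by linarith
  finally show ?thesis .
qed

lemma single_coord_family_query:
  assumes "finite P" "0 < m" "is_interval Y"
  shows "\<exists>S\<subseteq>single_coord_family P i m. pairwise (separated {i}) S \<and> \<Union>S \<subseteq> {x. x$i \<in> Y} \<and>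
           card ({x\<in>P. x$i \<in> Y} - \<Union>S) \<le> 4 * m"
proof -
  obtain s e where slab: "{x\<in>P. x$i \<in> Y} = rank_slice P i {s..<e}"
    using slab_eq_rank_slice[OF assms(1,3)] by metis
  show ?thesis
  proof (intro exI[of _ "rank_slice P i ` slab_cover P i m {s..<e}"] conjI)
    show "rank_slice P i ` slab_cover P i m {s..<e} \<subseteq> single_coord_family P i m"
      by (rule slab_cover_subset)
    show "pairwise (separated {i}) (rank_slice P i ` slab_cover P i m {s..<e})"
      by (rule pairwise_separated_slab_cover[OF assms(1,2)])
    show "\<Union>(rank_slice P i ` slab_cover P i m {s..<e}) \<subseteq> {x. x$i \<in> Y}"
      using Union_slab_cover_subset slab by blast
    show "card ({x\<in>P. x$i \<in> Y} - \<Union>(rank_slice P i ` slab_cover P i m {s..<e})) \<le> 4 * m"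
      unfolding slab by (rule card_slab_minus_slab_cover[OF assms(1,2)])
  qed
qed

lemma canonical_family_single:
  assumes "finite P" "0 < K"
  shows "\<exists>F. canonical_family {i} P K (12 * K) F"
proof (cases "card P < 3 * K")
  case True
  then have "card P \<le> 12 * K" by simp
  then have "canonical_family {i} P K (12 * K) {}" by (rule canonical_family_empty[OF assms(1)])
  then show ?thesis ..
next
  case False
  have "canonical_family {i} P K (12 * K) (single_coord_family P i (3 * K))"
  proof (rule canonical_familyI)
    show "finite (single_coord_family P i (3 * K))"
      by (simp add: single_coord_family_def heavy_ranks_def)
    show "Q \<subseteq> P" if "Q \<in> single_coord_family P i (3 * K)" for Q
      using that by (auto simp: single_coord_family_def rank_slice_def)
    show "card (single_coord_family P i (3 * K)) * K \<le> card P"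
      using card_single_coord_family[OF assms(1), of "3 * K" i] False by simp
  next
    fix I :: "'a \<Rightarrow> real set" assume "\<forall>j. is_interval (I j)"
    then obtain S where "S \<subseteq> single_coord_family P i (3 * K)" "pairwise (separated {i}) S"
      "\<Union>S \<subseteq> {x. x$i \<in> I i}" "card ({x\<in>P. x$i \<in> I i} - \<Union>S) \<le> 4 * (3 * K)"
      using single_coord_family_query[OF assms(1), of "3 * K" "I i" i] assms(2) by auto
    moreover have "P \<inter> coord_box {i} I = {x\<in>P. x$i \<in> I i}"
      by (auto simp: coord_box_singleton)
    ultimately show "\<exists>S\<subseteq>single_coord_family P i (3 * K). pairwise (separated {i}) S \<and>
        \<Union>S \<subseteq> coord_box {i} I \<and> card (P \<inter> coord_box {i} I - \<Union>S) \<le> 12 * K"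
      by (intro exI[of _ S]) (simp add: coord_box_singleton)
  qed
  then show ?thesis ..
qed

section \<open>Adding a coordinate\<close>

definition dyadic_slice :: "(real^'n) set \<Rightarrow> 'n \<Rightarrow> nat \<times> nat \<Rightarrow> (real^'n) set" where
  "dyadic_slice P i t = rank_slice P i (block (2^fst t) (snd t))"

definition dyadic_family ::
    "(real^'n) set \<Rightarrow> 'n \<Rightarrow> nat \<Rightarrow> ((real^'n) set \<Rightarrow> (real^'n) set set) \<Rightarrow> (real^'n) set set" where
  "dyadic_family P i L G = (\<Union>t\<in>{..L} \<times> {..<card P}. G (dyadic_slice P i t))"

lemma dyadic_slice_subset: "dyadic_slice P i t \<subseteq> P"
  by (auto simp: dyadic_slice_def rank_slice_def)

lemma dyadic_slice_subset_slab:
  "t \<in> maximal_dyadic_blocks L s e \<Longrightarrow> dyadic_slice P i t \<subseteq> rank_slice P i {s..<e}"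
  by (cases t) (auto simp: maximal_dyadic_blocks_def dyadic_slice_def rank_slice_def)

lemma card_dyadic_slices_level:
  assumes "finite P"
  shows "(\<Sum>a<card P. card (dyadic_slice P i (l, a))) \<le> card P"
proof -
  have "(\<Sum>a<card P. card (dyadic_slice P i (l, a))) = card (\<Union>a<card P. dyadic_slice P i (l, a))"
    using assms by (intro card_UN_disjoint[symmetric])
      (auto simp: dyadic_slice_def rank_slice_def mem_block_iff)
  also have "\<dots> \<le> card P"
    using assms by (intro card_mono) (auto simp: dyadic_slice_def rank_slice_def)
  finally show ?thesis .
qed

lemma card_dyadic_family:
  assumes "finite P" "\<And>Q. Q \<subseteq> P \<Longrightarrow> canonical_family J Q (K * (L + 1)) E (G Q)"
  shows "card (dyadic_family P i L G) * K \<le> card P"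
proof -
  let ?Idx = "{..L} \<times> {..<card P}"
  have "card (dyadic_family P i L G) * (K * (L + 1)) \<le>
      (\<Sum>t\<in>?Idx. card (G (dyadic_slice P i t))) * (K * (L + 1))"
    unfolding dyadic_family_def by (intro mult_le_mono1 card_UN_le) simp
  also have "\<dots> = (\<Sum>t\<in>?Idx. card (G (dyadic_slice P i t)) * (K * (L + 1)))"
    by (rule sum_distrib_right)
  also have "\<dots> \<le> (\<Sum>t\<in>?Idx. card (dyadic_slice P i t))"
    using canonical_familyD(3)[OF assms(2)[OF dyadic_slice_subset]] by (intro sum_mono)
  also have "\<dots> = (\<Sum>l\<le>L. \<Sum>a<card P. card (dyadic_slice P i (l, a)))"
    by (simp add: sum.cartesian_product)
  also have "\<dots> \<le> (\<Sum>l\<le>L. card P)"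
    using card_dyadic_slices_level[OF assms(1)] by (intro sum_mono)
  finally have "card (dyadic_family P i L G) * K * (L + 1) \<le> card P * (L + 1)"
    by (simp add: algebra_simps)
  then show ?thesis by (meson mult_le_cancel2 zero_less_Suc[of L, unfolded Suc_eq_plus1])
qed

lemma pairwise_separated_UN_dyadic_slices:
  assumes "finite P" "i \<in> J'" "J \<subseteq> J'"
    and "\<And>t. t \<in> T \<Longrightarrow> pairwise (separated J) (S t)"
    and "\<And>t Q. t \<in> T \<Longrightarrow> Q \<in> S t \<Longrightarrow> Q \<subseteq> dyadic_slice P i t"
    and "\<And>t t'. t \<in> T \<Longrightarrow> t' \<in> T \<Longrightarrow> t \<noteq> t' \<Longrightarrow>
           block (2^fst t) (snd t) \<inter> block (2^fst t') (snd t') = {}"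
  shows "pairwise (separated J') (\<Union>t\<in>T. S t)"
proof (rule pairwiseI)
  fix Q Q' assume "Q \<in> (\<Union>t\<in>T. S t)" "Q' \<in> (\<Union>t\<in>T. S t)" "Q \<noteq> Q'"
  then obtain t t' where t: "t \<in> T" "Q \<in> S t" and t': "t' \<in> T" "Q' \<in> S t'" by blast
  show "separated J' Q Q'"
  proof (cases "t = t'")
    case True
    then show ?thesis
      using assms(3,4) t t' \<open>Q \<noteq> Q'\<close> by (metis pairwiseD separated_mono)
  next
    case False
    have "Q \<subseteq> rank_slice P i {snd t * 2^fst t..<(snd t + 1) * 2^fst t}"
      "Q' \<subseteq> rank_slice P i {snd t' * 2^fst t'..<(snd t' + 1) * 2^fst t'}"
      using assms(5) t t' by (simp_all add: dyadic_slice_def block_def)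
    moreover have "{snd t * 2^fst t..<(snd t + 1) * 2^fst t} \<inter>
        {snd t' * 2^fst t'..<(snd t' + 1) * 2^fst t'} = {}"
      using assms(6) t(1) t'(1) False by (simp add: block_def)
    ultimately show ?thesis by (rule separated_if_disjoint_rank_intervals[OF assms(1,2)])
  qed
qed

lemma card_slab_minus_dyadic_cover:
  assumes "finite P" "e \<le> 2^L" "{x\<in>P. x$i \<in> I i} = rank_slice P i {s..<e}"
    and "\<And>t. card (dyadic_slice P i t \<inter> coord_box J I - \<Union>(S t)) \<le> E"
  shows "card (P \<inter> coord_box (insert i J) I - \<Union>(\<Union>t\<in>maximal_dyadic_blocks L s e. S t))
    \<le> 2 * (L + 1) * E"
proof -
  let ?T = "maximal_dyadic_blocks L s e"
  have "P \<inter> coord_box (insert i J) I - \<Union>(\<Union>t\<in>?T. S t) \<subseteq>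
      (\<Union>t\<in>?T. dyadic_slice P i t \<inter> coord_box J I - \<Union>(S t))"
  proof
    fix x assume x: "x \<in> P \<inter> coord_box (insert i J) I - \<Union>(\<Union>t\<in>?T. S t)"
    then have "coord_rank P i x \<in> {s..<e}"
      using assms(3) by (auto simp: coord_box_insert rank_slice_def)
    then obtain l a where "(l, a) \<in> ?T" "coord_rank P i x \<in> block (2^l) a"
      using maximal_dyadic_blocks_cover[OF assms(2)] by blast
    then show "x \<in> (\<Union>t\<in>?T. dyadic_slice P i t \<inter> coord_box J I - \<Union>(S t))"
      using x by (intro UN_I[of "(l, a)"]) (auto simp: dyadic_slice_def rank_slice_def coord_box_insert)
  qed
  then have "card (P \<inter> coord_box (insert i J) I - \<Union>(\<Union>t\<in>?T. S t)) \<le>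
      card (\<Union>t\<in>?T. dyadic_slice P i t \<inter> coord_box J I - \<Union>(S t))"
    by (intro card_mono finite_subset[OF _ assms(1)]) (auto simp: dyadic_slice_def rank_slice_def)
  also have "\<dots> \<le> (\<Sum>t\<in>?T. card (dyadic_slice P i t \<inter> coord_box J I - \<Union>(S t)))"
    by (rule card_UN_le) (simp add: finite_subset[OF maximal_dyadic_blocks_subset])
  also have "\<dots> \<le> card ?T * E"
    using assms(4) sum_mono[of ?T _ "\<lambda>_. E"] by simp
  also have "\<dots> \<le> 2 * (L + 1) * E"
    by (intro mult_le_mono1 card_maximal_dyadic_blocks)
  finally show ?thesis .
qed

lemma dyadic_family_query:
  assumes "finite P" "card P \<le> 2^L" "\<forall>j. is_interval (I j)"
    and "\<And>Q. Q \<subseteq> P \<Longrightarrow> canonical_family J Q K E (G Q)"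
  shows "\<exists>S\<subseteq>dyadic_family P i L G. pairwise (separated (insert i J)) S \<and>
           \<Union>S \<subseteq> coord_box (insert i J) I \<and>
           card (P \<inter> coord_box (insert i J) I - \<Union>S) \<le> 2 * (L + 1) * E"
proof -
  obtain s e where "e \<le> card P" and slab: "{x\<in>P. x$i \<in> I i} = rank_slice P i {s..<e}"
    using slab_eq_rank_slice[OF assms(1)] assms(3) by metis
  define T where "T = maximal_dyadic_blocks L s e"
  have "\<exists>S\<subseteq>G (dyadic_slice P i t). pairwise (separated J) S \<and> \<Union>S \<subseteq> coord_box J I \<and>
      card (dyadic_slice P i t \<inter> coord_box J I - \<Union>S) \<le> E" for t
    by (rule canonical_family_query[OF assms(4)[OF dyadic_slice_subset] assms(3)]) blast
  then obtain S where S: "\<And>t. S t \<subseteq> G (dyadic_slice P i t)"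
    "\<And>t. pairwise (separated J) (S t)" "\<And>t. \<Union>(S t) \<subseteq> coord_box J I"
    "\<And>t. card (dyadic_slice P i t \<inter> coord_box J I - \<Union>(S t)) \<le> E"
    by metis
  have in_slice: "Q \<subseteq> dyadic_slice P i t" if "Q \<in> S t" for t Q
    using S(1) canonical_familyD(2)[OF assms(4)[OF dyadic_slice_subset]] that by blast
  have "T \<subseteq> {..L} \<times> {..<card P}"
    using maximal_dyadic_blocks_subset \<open>e \<le> card P\<close> by (fastforce simp: T_def)
  then have family: "(\<Union>t\<in>T. S t) \<subseteq> dyadic_family P i L G"
    using S(1) by (fastforce simp: dyadic_family_def)
  have "block (2^fst t) (snd t) \<inter> block (2^fst t') (snd t') = {}"
    if "t \<in> T" "t' \<in> T" "t \<noteq> t'" for t t'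
    using that maximal_dyadic_blocks_disjoint[of "fst t" "snd t" L s e "fst t'" "snd t'"]
    by (simp add: T_def prod_eq_iff)
  then have separated: "pairwise (separated (insert i J)) (\<Union>t\<in>T. S t)"
    by (intro pairwise_separated_UN_dyadic_slices[OF assms(1) _ _ S(2) in_slice]) auto
  have inside: "\<Union>(\<Union>t\<in>T. S t) \<subseteq> coord_box (insert i J) I"
    using S(3) in_slice dyadic_slice_subset_slab slab by (fastforce simp: T_def coord_box_insert)
  have "e \<le> 2^L" using assms(2) \<open>e \<le> card P\<close> by linarith
  show ?thesis
  proof (intro exI[of _ "\<Union>t\<in>T. S t"] conjI family separated inside)
    show "card (P \<inter> coord_box (insert i J) I - \<Union>(\<Union>t\<in>T. S t)) \<le> 2 * (L + 1) * E"
      unfolding T_def by (rule card_slab_minus_dyadic_cover[OF assms(1) \<open>e \<le> 2^L\<close> slab S(4)])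
  qed
qed

lemma canonical_family_insert:
  assumes "finite P" "card P \<le> 2^L"
    and "\<And>Q. Q \<subseteq> P \<Longrightarrow> canonical_family J Q (K * (L + 1)) E (G Q)"
  shows "canonical_family (insert i J) P K (2 * (L + 1) * E) (dyadic_family P i L G)"
proof (rule canonical_familyI)
  show "finite (dyadic_family P i L G)"
    using canonical_familyD(1)[OF assms(3)[OF dyadic_slice_subset]] by (simp add: dyadic_family_def)
  show "Q \<subseteq> P" if "Q \<in> dyadic_family P i L G" for Q
    using that canonical_familyD(2)[OF assms(3)[OF dyadic_slice_subset]] dyadic_slice_subset
    unfolding dyadic_family_def by blast
  show "card (dyadic_family P i L G) * K \<le> card P"
    by (rule card_dyadic_family[OF assms(1,3)])
  show "\<exists>S\<subseteq>dyadic_family P i L G. pairwise (separated (insert i J)) S \<and>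
      \<Union>S \<subseteq> coord_box (insert i J) I \<and> card (P \<inter> coord_box (insert i J) I - \<Union>S) \<le> 2 * (L + 1) * E"
    if "\<forall>j. is_interval (I j)" for I
    by (rule dyadic_family_query[OF assms(1,2) that assms(3)])
qed

definition has_canonical_families :: "'n::finite set \<Rightarrow> bool" where
  "has_canonical_families J \<longleftrightarrow> (\<exists>A. \<forall>(P :: (real^'n) set) K. finite P \<longrightarrow> 0 < K \<longrightarrow>
     (\<exists>F. canonical_family J P K (A * K * (ceillog2 (card P) + 1) ^ (2 * (card J - 1))) F))"

lemma has_canonical_families_singleton: "has_canonical_families {i}"
  unfolding has_canonical_families_def
  by (intro exI[of _ 12] allI impI) (simp add: canonical_family_single)

lemma canonical_family_insert_log:
  assumes "finite P" "0 < K"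
    and "\<And>(Q :: (real^'n) set) K. finite Q \<Longrightarrow> 0 < K \<Longrightarrow>
           \<exists>F. canonical_family J Q K (A * K * (ceillog2 (card Q) + 1) ^ d) F"
  shows "\<exists>F. canonical_family (insert i J) P K (2 * A * K * (ceillog2 (card P) + 1) ^ (d + 2)) F"
proof -
  define L where "L = ceillog2 (card P)"
  define E where "E = A * (K * (L + 1)) * (L + 1) ^ d"
  have "\<exists>F. canonical_family J Q (K * (L + 1)) E F" if "Q \<subseteq> P" for Q
  proof -
    have "finite Q" using that assms(1) by (rule finite_subset)
    then obtain F where "canonical_family J Q (K * (L + 1))
        (A * (K * (L + 1)) * (ceillog2 (card Q) + 1) ^ d) F"
      using assms(2,3) by fastforce
    moreover have "ceillog2 (card Q) \<le> L"
      unfolding L_def using that assms(1) by (intro ceillog2_mono card_mono)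
    ultimately show ?thesis
      unfolding E_def by (meson add_le_mono1 canonical_family_mono mult_le_mono2 power_mono zero_le)
  qed
  then obtain G where "\<And>Q. Q \<subseteq> P \<Longrightarrow> canonical_family J Q (K * (L + 1)) E (G Q)"
    by metis
  then have "canonical_family (insert i J) P K (2 * (L + 1) * E) (dyadic_family P i L G)"
    using assms(1) by (intro canonical_family_insert) (simp_all add: L_def le_two_power_ceillog2)
  moreover have "2 * (L + 1) * E = 2 * A * K * (L + 1) ^ (d + 2)"
    by (simp add: E_def power_add power2_eq_square algebra_simps)
  ultimately show ?thesis unfolding L_def by metis
qed

lemma has_canonical_families_insert:
  assumes "has_canonical_families J" "finite J" "J \<noteq> {}" "i \<notin> J"
  shows "has_canonical_families (insert i J)"
proof -
  define d where "d = 2 * (card J - 1)"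
  obtain A where A: "\<And>(P :: (real^'a) set) K. finite P \<Longrightarrow> 0 < K \<Longrightarrow>
      \<exists>F. canonical_family J P K (A * K * (ceillog2 (card P) + 1) ^ d) F"
    using assms(1) unfolding has_canonical_families_def d_def by blast
  have exponent: "2 * (card (insert i J) - 1) = d + 2"
  proof -
    have "card J \<noteq> 0" "card (insert i J) = Suc (card J)" using assms(2-4) by simp_all
    then show ?thesis unfolding d_def by arith
  qed
  show ?thesis
    unfolding has_canonical_families_def exponent
    by (intro exI[of _ "2 * A"] allI impI canonical_family_insert_log A)
qed

lemma has_canonical_families:
  assumes "finite J" "J \<noteq> {}"
  shows "has_canonical_families J"
  using assms
proof (induction J rule: finite_ne_induct)
  case (singleton i)
  then show ?case by (rule has_canonical_families_singleton)
next
  case (insert i J)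
  then show ?case by (intro has_canonical_families_insert)
qed

section \<open>Bounding boxes\<close>

definition bounding_box :: "(real^'n) set \<Rightarrow> (real^'n) set" where
  "bounding_box Q = {x. \<forall>j. \<exists>a\<in>Q. \<exists>b\<in>Q. a$j \<le> x$j \<and> x$j \<le> b$j}"

lemma axis_box_bounding_box: "axis_box (bounding_box Q)"
  unfolding axis_box_def
proof (intro exI conjI allI)
  fix j
  show "is_interval {v. \<exists>a\<in>Q. \<exists>b\<in>Q. a$j \<le> v \<and> v \<le> b$j}"
    unfolding is_interval_1
  proof (intro ballI allI impI)
    fix u w v assume "u \<in> {v. \<exists>a\<in>Q. \<exists>b\<in>Q. a$j \<le> v \<and> v \<le> b$j}"
      "w \<in> {v. \<exists>a\<in>Q. \<exists>b\<in>Q. a$j \<le> v \<and> v \<le> b$j}" "u \<le> v \<and> v \<le> w"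
    then obtain a b where "a \<in> Q" "b \<in> Q" "a$j \<le> v" "v \<le> b$j" by force
    then show "v \<in> {v. \<exists>a\<in>Q. \<exists>b\<in>Q. a$j \<le> v \<and> v \<le> b$j}" by blast
  qed
qed (simp add: bounding_box_def)

lemma subset_bounding_box: "Q \<subseteq> bounding_box Q"
  unfolding bounding_box_def by blast

lemma bounding_box_subset:
  assumes "\<forall>j. is_interval (I j)" "Q \<subseteq> coord_box UNIV I"
  shows "bounding_box Q \<subseteq> coord_box UNIV I"
proof
  fix x assume x: "x \<in> bounding_box Q"
  have "x$j \<in> I j" for j
  proof -
    obtain a b where "a \<in> Q" "b \<in> Q" "a$j \<le> x$j" "x$j \<le> b$j"
      using x unfolding bounding_box_def by blast
    moreover have "a$j \<in> I j" "b$j \<in> I j"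
      using assms(2) \<open>a \<in> Q\<close> \<open>b \<in> Q\<close> by (auto simp: coord_box_def)
    ultimately show ?thesis using assms(1) unfolding is_interval_1 by blast
  qed
  then show "x \<in> coord_box UNIV I" by (simp add: coord_box_def)
qed

lemma disjnt_bounding_box_if_separated:
  assumes "separated J Q Q'"
  shows "disjnt (bounding_box Q) (bounding_box Q')"
proof -
  obtain i where i: "(\<forall>x\<in>Q. \<forall>y\<in>Q'. x$i < y$i) \<or> (\<forall>x\<in>Q. \<forall>y\<in>Q'. y$i < x$i)"
    using assms unfolding separated_def by blast
  have "False" if z: "z \<in> bounding_box Q" "z \<in> bounding_box Q'" for z
  proof -
    obtain a b where "a \<in> Q" "b \<in> Q" "a$i \<le> z$i" "z$i \<le> b$i"
      using z(1) unfolding bounding_box_def by blast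
    moreover obtain a' b' where "a' \<in> Q'" "b' \<in> Q'" "a'$i \<le> z$i" "z$i \<le> b'$i"
      using z(2) unfolding bounding_box_def by blast
    ultimately show False using i by force
  qed
  then show ?thesis unfolding disjnt_def by blast
qed

lemma box_decomposition:
  assumes "finite P" "canonical_family UNIV P K E F" "axis_box R"
  shows "\<exists>\<S> R'. \<S> \<subseteq> bounding_box ` F \<and> R' \<subseteq> R \<and> R = \<Union>\<S> \<union> R' \<and>
    pairwise disjnt \<S> \<and> (\<forall>S\<in>\<S>. disjnt S R') \<and> card (P \<inter> R') \<le> E"
proof -
  obtain I where I: "\<forall>j. is_interval (I j)" and R: "R = coord_box UNIV I"
    using assms(3) by (auto simp: axis_box_def coord_box_def)
  obtain S where S: "S \<subseteq> F" "pairwise (separated UNIV) S" "\<Union>S \<subseteq> R"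
    "card (P \<inter> R - \<Union>S) \<le> E"
    unfolding R by (rule canonical_family_query[OF assms(2) I])
  define R' where "R' = R - \<Union>(bounding_box ` S)"
  have "\<Union>(bounding_box ` S) \<subseteq> R"
    unfolding R by (intro UN_least bounding_box_subset[OF I]) (use S(3) R in blast)
  moreover have "pairwise disjnt (bounding_box ` S)"
    by (intro pairwise_imageI disjnt_bounding_box_if_separated) (use S(2) in \<open>auto simp: pairwise_def\<close>)
  moreover have "card (P \<inter> R') \<le> E"
  proof -
    have "P \<inter> R' \<subseteq> P \<inter> R - \<Union>S"
      using subset_bounding_box by (fastforce simp: R'_def)
    then have "card (P \<inter> R') \<le> card (P \<inter> R - \<Union>S)"
      using assms(1) by (intro card_mono) auto
    then show ?thesis using S(4) by linarith
  qed
  ultimately show ?thesis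
    using S(1) by (intro exI[of _ "bounding_box ` S"] exI[of _ R']) (auto simp: R'_def disjnt_def)
qed

lemma ceillog2_plus_one_le_ln:
  assumes "2 \<le> n"
  shows "real (ceillog2 n) + 1 \<le> 6 * ln (real n)"
proof -
  have ln2: "1/2 \<le> ln (2::real)"
    using ln_le_minus_one[of "1/2 :: real"] by (simp add: ln_div)
  have "ln 2 \<le> ln (real n)" using assms by simp
  then have lnn: "1/2 \<le> ln (real n)" using ln2 by linarith
  have "log 2 (real n) = ln (real n) / ln 2" by (simp add: log_def)
  also have "\<dots> \<le> ln (real n) / (1/2)"
    using ln2 lnn by (intro divide_left_mono) auto
  finally have "log 2 (real n) \<le> 2 * ln (real n)" by simp
  moreover have "real (ceillog2 n) < log 2 (real n) + 1"
    using assms by (intro ceillog2_less_log) simp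
  ultimately show ?thesis using lnn by linarith
qed

lemma ceillog2_plus_one_power_le:
  assumes "2 \<le> n"
  shows "real ((ceillog2 n + 1) ^ d) \<le> 6 ^ d * ln (real n) ^ d"
proof -
  have "(real (ceillog2 n) + 1) ^ d \<le> (6 * ln (real n)) ^ d"
    using ceillog2_plus_one_le_ln[OF assms] by (intro power_mono) auto
  then show ?thesis by (simp add: power_mult_distrib add.commute)
qed

lemma bounding_boxes_of_canonical_family:
  fixes P :: "(real^'n) set"
  assumes "finite P" "canonical_family UNIV P 8 E F" "real E \<le> c"
  shows "\<exists>\<B>. finite \<B> \<and> real (card \<B>) \<le> real (card P) / 8 \<and> (\<forall>B\<in>\<B>. axis_box B) \<and>
    (\<forall>R. axis_box R \<longrightarrow> (\<exists>\<S> R'. \<S> \<subseteq> \<B> \<and> R' \<subseteq> R \<and> R = \<Union>\<S> \<union> R' \<and>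
       pairwise disjnt \<S> \<and> (\<forall>S\<in>\<S>. disjnt S R') \<and> real (card (P \<inter> R')) \<le> c))"
proof (rule exI[of _ "bounding_box ` F"], intro conjI ballI allI impI)
  show "finite (bounding_box ` F)" using canonical_familyD(1)[OF assms(2)] by simp
  have "card (bounding_box ` F) \<le> card F"
    by (rule card_image_le[OF canonical_familyD(1)[OF assms(2)]])
  then show "real (card (bounding_box ` F)) \<le> real (card P) / 8"
    using canonical_familyD(3)[OF assms(2)] by simp
  show "axis_box B" if "B \<in> bounding_box ` F" for B
    using that axis_box_bounding_box by blast
next
  fix R :: "(real^'n) set" assume "axis_box R"
  then have "\<exists>\<S> R'. \<S> \<subseteq> bounding_box ` F \<and> R' \<subseteq> R \<and> R = \<Union>\<S> \<union> R' \<and>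
      pairwise disjnt \<S> \<and> (\<forall>S\<in>\<S>. disjnt S R') \<and> card (P \<inter> R') \<le> E"
    by (rule box_decomposition[OF assms(1,2)])
  then obtain \<S> R' where D: "\<S> \<subseteq> bounding_box ` F" "R' \<subseteq> R" "R = \<Union>\<S> \<union> R'"
    "pairwise disjnt \<S>" "\<forall>S\<in>\<S>. disjnt S R'" "card (P \<inter> R') \<le> E"
    by blast
  have "real (card (P \<inter> R')) \<le> c" using D(6) assms(3) by linarith
  then show "\<exists>\<S> R'. \<S> \<subseteq> bounding_box ` F \<and> R' \<subseteq> R \<and> R = \<Union>\<S> \<union> R' \<and>
      pairwise disjnt \<S> \<and> (\<forall>S\<in>\<S>. disjnt S R') \<and> real (card (P \<inter> R')) \<le> c"
    by (intro exI[of _ \<S>] exI[of _ R'] conjI D(1-5))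
qed

theorem lemma15:
  shows "\<exists>C :: real. \<forall>P :: (real ^ 'n) set. finite P \<and> card P \<ge> 2 \<longrightarrow>
     (\<exists>\<B> :: (real ^ 'n) set set. finite \<B> \<and> real (card \<B>) \<le> real (card P) / 8 \<and>
        (\<forall>B\<in>\<B>. axis_box B) \<and>
        (\<forall>R. axis_box R \<longrightarrow>
           (\<exists>\<S> R'. \<S> \<subseteq> \<B> \<and> R' \<subseteq> R \<and>
              R = \<Union>\<S> \<union> R' \<and>
              pairwise disjnt \<S> \<and> (\<forall>S\<in>\<S>. disjnt S R') \<and>
              real (card (P \<inter> R')) \<le> C * (ln (real (card P))) ^ (2 * CARD('n) - 2))))"
proof -
  define d where "d = 2 * CARD('n) - 2"
  have "has_canonical_families (UNIV :: 'n set)" by (rule has_canonical_families) simp_all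
  moreover have "2 * (card (UNIV :: 'n set) - 1) = d" by (simp add: d_def)
  ultimately obtain A where A: "\<And>(P :: (real^'n) set) K. finite P \<Longrightarrow> 0 < K \<Longrightarrow>
      \<exists>F. canonical_family UNIV P K (A * K * (ceillog2 (card P) + 1) ^ d) F"
    unfolding has_canonical_families_def by metis
  show ?thesis
  proof (intro exI[of _ "real (8 * A) * 6 ^ d"] allI impI)
    fix P :: "(real^'n) set" assume P: "finite P \<and> 2 \<le> card P"
    then obtain F where F: "canonical_family UNIV P 8 (A * 8 * (ceillog2 (card P) + 1) ^ d) F"
      using A[of P 8] by auto
    have "real (A * 8 * (ceillog2 (card P) + 1) ^ d) \<le> real (8 * A) * 6 ^ d * ln (real (card P)) ^ d"
      using ceillog2_plus_one_power_le[of "card P" d] P by (simp add: mult_left_mono mult.assoc)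
    from bounding_boxes_of_canonical_family[OF _ F this] P
    show "\<exists>\<B>. finite \<B> \<and> real (card \<B>) \<le> real (card P) / 8 \<and> (\<forall>B\<in>\<B>. axis_box B) \<and>
        (\<forall>R. axis_box R \<longrightarrow> (\<exists>\<S> R'. \<S> \<subseteq> \<B> \<and> R' \<subseteq> R \<and> R = \<Union>\<S> \<union> R' \<and>
           pairwise disjnt \<S> \<and> (\<forall>S\<in>\<S>. disjnt S R') \<and>
           real (card (P \<inter> R')) \<le> real (8 * A) * 6 ^ d * ln (real (card P)) ^ (2 * CARD('n) - 2)))"
      unfolding d_def by simp
  qed
qed

end
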